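(* Let $D>0$, let $(L,\mathbf N)$ be an architecture with $N_0=d$, let $q\in[1,\infty]$, $r\ge1$, $\eta>0$, and let $Q_\eta:\Theta_{L,\mathbf N}\to\Theta_{L,\mathbf N}$ act coordinatewise by $Q_\eta(x)=\lfloor x/\eta\rfloor\eta$. Let $N_{\min}=\min_{0\le\ell\le L}N_\ell$ and $c':=DN_{\min}^{1/q}$. If $\varepsilon>0$ is such that $$\max_{\theta\in\Theta^q_{L,\mathbf N}(r)}\ \max_{x\in[-D,D]^d}\|R_\theta(x)-R_{Q_\eta(\theta)}(x)\|_q\le\varepsilon,$$ then $\min(r,\eta)\le\frac{\varepsilon}{c'r^{L-1}}$. In particular, if moreover $\varepsilon<c'r^L$, then $\eta\le\frac{\varepsilon}{c'r^{L-1}}$.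
   Context: ReLU $\rho(x)=\max(0,x)$ coordinatewise. Architecture $(L,\mathbf N)$, $\mathbf N=(N_0,\dots,N_L)$; parameters $\theta=(W_1,\dots,W_L,b_1,\dots,b_L)$, $W_\ell\in\mathbb R^{N_\ell\times N_{\ell-1}}$, $b_\ell\in\mathbb R^{N_\ell}$, forming $\Theta_{L,\mathbf N}$. Realization: $R_\theta(x)=W_Ly_{L-1}(x)+b_L$, $y_0=x$, $y_\ell=\rho(W_\ell y_{\ell-1}+b_\ell)$, $1\le\ell\le L-1$. $\|M\|_{q\to q}$ is the operator norm induced by $\|\cdot\|_q$. $\Theta^q_{L,\mathbf N}(r)=\{\theta:\|W_\ell\|_{q\to q}\le r,\ \|b_\ell\|_q\le r\ \forall\ell\}$. $\lfloor x\rfloor=\max\{n\in\mathbb Z:n\le x\}$; $N^{1/\infty}:=1$. *)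

theory Defs
  imports "HOL-Analysis.Analysis"
begin

text \<open>Vectors in R^n are functions nat => real, only indices i < n matter.
  Matrices in R^(m x n) are functions nat => nat => real, only i < m, j < n matter.\<close>

definition qnorm :: "ereal \<Rightarrow> nat \<Rightarrow> (nat \<Rightarrow> real) \<Rightarrow> real" where
  "qnorm q n x =
     (if q = \<infinity> then Max ({\<bar>x i\<bar> | i. i < n} \<union> {0})
      else (\<Sum>i<n. \<bar>x i\<bar> powr real_of_ereal q) powr (1 / real_of_ereal q))"

definition matvec :: "nat \<Rightarrow> (nat \<Rightarrow> nat \<Rightarrow> real) \<Rightarrow> (nat \<Rightarrow> real) \<Rightarrow> (nat \<Rightarrow> real)" where
  "matvec n M x = (\<lambda>i. \<Sum>j<n. M i j * x j)"

definition opnorm :: "ereal \<Rightarrow> nat \<Rightarrow> nat \<Rightarrow> (nat \<Rightarrow> nat \<Rightarrow> real) \<Rightarrow> real" where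
  "opnorm q m n M = Sup {qnorm q m (matvec n M x) | x. qnorm q n x \<le> 1}"

text \<open>Parameters: W l (l = 1..L) is an N l x N (l-1) matrix, b l is in R^(N l).\<close>

fun hidden :: "(nat \<Rightarrow> nat) \<Rightarrow> (nat \<Rightarrow> nat \<Rightarrow> nat \<Rightarrow> real) \<Rightarrow> (nat \<Rightarrow> nat \<Rightarrow> real)
     \<Rightarrow> nat \<Rightarrow> (nat \<Rightarrow> real) \<Rightarrow> (nat \<Rightarrow> real)" where
  "hidden N W b 0 x = x"
| "hidden N W b (Suc l) x =
     (\<lambda>i. max 0 (matvec (N l) (W (Suc l)) (hidden N W b l x) i + b (Suc l) i))"

definition realization :: "nat \<Rightarrow> (nat \<Rightarrow> nat) \<Rightarrow> (nat \<Rightarrow> nat \<Rightarrow> nat \<Rightarrow> real) \<Rightarrow> (nat \<Rightarrow> nat \<Rightarrow> real)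
     \<Rightarrow> (nat \<Rightarrow> real) \<Rightarrow> (nat \<Rightarrow> real)" where
  "realization L N W b x =
     (\<lambda>i. matvec (N (L - 1)) (W L) (hidden N W b (L - 1) x) i + b L i)"

definition param_ball :: "ereal \<Rightarrow> nat \<Rightarrow> (nat \<Rightarrow> nat) \<Rightarrow> real
     \<Rightarrow> (nat \<Rightarrow> nat \<Rightarrow> nat \<Rightarrow> real) \<Rightarrow> (nat \<Rightarrow> nat \<Rightarrow> real) \<Rightarrow> bool" where
  "param_ball q L N r W b \<longleftrightarrow>
     (\<forall>l\<in>{1..L}. opnorm q (N l) (N (l - 1)) (W l) \<le> r \<and> qnorm q (N l) (b l) \<le> r)"

definition quant :: "real \<Rightarrow> real \<Rightarrow> real" where
  "quant \<eta> x = real_of_int \<lfloor>x / \<eta>\<rfloor> * \<eta>"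

definition root_q :: "real \<Rightarrow> ereal \<Rightarrow> real" where
  "root_q N q = (if q = \<infinity> then 1 else N powr (1 / real_of_ereal q))"

end

theory Submission imports Defs begin

text \<open>Take diagonal weights on the first \<open>N\<^sub>m\<^sub>i\<^sub>n\<close> coordinates, equal to some
  \<open>a \<in> [0, min r \<eta>)\<close> in the first layer and to \<open>r\<close> in all later layers, zero biases, and the
  constant input \<open>D\<close>. This network lies in \<open>\<Theta>\<^sup>q(r)\<close> and outputs \<open>a r\<^sup>L\<^sup>-\<^sup>1 D\<close> on the first
  \<open>N\<^sub>m\<^sub>i\<^sub>n\<close> coordinates, while quantization rounds \<open>a\<close> down to \<open>0\<close>, so the quantized network is
  identically zero. The error \<open>a r\<^sup>L\<^sup>-\<^sup>1 D N\<^sub>m\<^sub>i\<^sub>n\<^sup>1\<^sup>/\<^sup>q\<close> is thus at most \<open>\<epsilon>\<close> for every such \<open>a\<close>,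
  and letting \<open>a\<close> approach \<open>min r \<eta>\<close> gives the bound.\<close>

definition diag_mat :: "nat \<Rightarrow> real \<Rightarrow> nat \<Rightarrow> nat \<Rightarrow> real" where
  "diag_mat m c i j = (if i = j \<and> i < m then c else 0)"

lemma matvec_diag_mat:
  assumes "m \<le> n"
  shows "matvec n (diag_mat m c) h = (\<lambda>i. if i < m then c * h i else 0)"
proof
  fix i
  show "matvec n (diag_mat m c) h i = (if i < m then c * h i else 0)"
  proof (cases "i < m")
    case True
    have "matvec n (diag_mat m c) h i = (\<Sum>j<n. if j = i then c * h j else 0)"
      unfolding matvec_def diag_mat_def using True by (intro sum.cong) auto
    also have "\<dots> = c * h i" using True assms by (simp add: sum.delta')
    finally show ?thesis using True by simp
  qed (simp add: matvec_def diag_mat_def)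
qed

lemma qnorm_zero: "qnorm q n (\<lambda>i. 0) = 0"
proof -
  have "{\<bar>0::real\<bar> | i. i < n} \<union> {0} = {0}" by auto
  then show ?thesis unfolding qnorm_def by (simp del: Un_insert_right)
qed

lemma qnorm_truncate_scale_le:
  assumes q: "1 \<le> q" and "m \<le> n" "m \<le> n'" "0 \<le> c"
  shows "qnorm q n (\<lambda>i. if i < m then c * x i else 0) \<le> c * qnorm q n' x"
proof (cases "q = \<infinity>")
  case True
  define S where "S = {\<bar>x i\<bar> | i. i < n'} \<union> {0}"
  have fin: "finite S" unfolding S_def by simp
  have S0: "0 \<le> Max S" using fin by (intro Max_ge) (auto simp: S_def)
  have "y \<le> c * Max S" if "y \<in> {\<bar>if i < m then c * x i else 0\<bar> | i. i < n} \<union> {0}" for y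
  proof -
    from that consider "y = 0" | i where "i < m" "y = c * \<bar>x i\<bar>" | "y = 0"
      using assms by (auto simp: abs_mult split: if_splits)
    then show ?thesis
    proof cases
      case (2 i)
      have "\<bar>x i\<bar> \<le> Max S" using fin 2 assms by (intro Max_ge) (auto simp: S_def)
      then show ?thesis using 2 assms by (simp add: mult_left_mono)
    qed (use S0 assms in simp_all)
  qed
  then show ?thesis using True unfolding qnorm_def S_def by (simp add: Max_le_iff)
next
  case False
  then obtain p where qp: "q = ereal p" using q by (cases q) auto
  have p: "p \<ge> 1" using q qp by simp
  have "(\<Sum>i<n. \<bar>if i < m then c * x i else 0\<bar> powr p)
      = (\<Sum>i<n. if i < m then c powr p * \<bar>x i\<bar> powr p else 0)"
    using assms by (intro sum.cong) (auto simp: abs_mult powr_mult)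
  also have "\<dots> = c powr p * (\<Sum>i<m. \<bar>x i\<bar> powr p)"
    using \<open>m \<le> n\<close> by (simp add: sum.If_cases sum_distrib_left Int_absorb1 subset_eq flip: lessThan_def)
  also have "\<dots> \<le> c powr p * (\<Sum>i<n'. \<bar>x i\<bar> powr p)"
    using assms by (intro mult_left_mono sum_mono2) auto
  finally have "(\<Sum>i<n. \<bar>if i < m then c * x i else 0\<bar> powr p) powr (1/p)
      \<le> (c powr p * (\<Sum>i<n'. \<bar>x i\<bar> powr p)) powr (1/p)"
    using p by (intro powr_mono2) (auto intro: sum_nonneg)
  also have "\<dots> = c * (\<Sum>i<n'. \<bar>x i\<bar> powr p) powr (1/p)"
    using p assms by (simp add: powr_mult powr_powr sum_nonneg)
  finally show ?thesis using qp unfolding qnorm_def by simp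
qed

lemma qnorm_indicator_const:
  assumes q: "1 \<le> q" and "m \<le> n" "1 \<le> m" "0 \<le> v"
  shows "qnorm q n (\<lambda>i. if i < m then v else 0) = v * root_q (real m) q"
proof (cases "q = \<infinity>")
  case True
  have "Max ({\<bar>if i < m then v else 0\<bar> | i. i < n} \<union> {0}) = v"
  proof (rule Max_eqI)
    show "v \<in> {\<bar>if i < m then v else 0\<bar> | i. i < n} \<union> {0}"
      using assms by (auto intro!: exI[of _ 0])
  qed (use assms in auto)
  then show ?thesis using True unfolding qnorm_def root_q_def by simp
next
  case False
  then obtain p where qp: "q = ereal p" using q by (cases q) auto
  have p: "p \<ge> 1" using q qp by simp
  have "(\<Sum>i<n. \<bar>if i < m then v else 0\<bar> powr p) = (\<Sum>i<n. if i < m then v powr p else 0)"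
    using assms by (intro sum.cong) auto
  also have "\<dots> = real m * v powr p"
    using \<open>m \<le> n\<close> by (simp add: sum.If_cases Int_absorb1 subset_eq flip: lessThan_def)
  finally have "(\<Sum>i<n. \<bar>if i < m then v else 0\<bar> powr p) powr (1/p) = real m powr (1/p) * v"
    using p assms by (simp add: powr_mult powr_powr)
  then show ?thesis using qp unfolding qnorm_def root_q_def by simp
qed

lemma opnorm_diag_mat_le:
  assumes "1 \<le> q" "m \<le> nr" "m \<le> nc" "0 \<le> c"
  shows "opnorm q nr nc (diag_mat m c) \<le> c"
  unfolding opnorm_def
proof (rule cSup_least)
  show "{qnorm q nr (matvec nc (diag_mat m c) x) | x. qnorm q nc x \<le> 1} \<noteq> {}"
    using qnorm_zero[of q nc] by (metis (mono_tags, lifting) empty_Collect_eq order.refl zero_le_one)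
  fix y assume "y \<in> {qnorm q nr (matvec nc (diag_mat m c) x) | x. qnorm q nc x \<le> 1}"
  then obtain x where y: "y = qnorm q nr (matvec nc (diag_mat m c) x)" and x: "qnorm q nc x \<le> 1"
    by auto
  have "y = qnorm q nr (\<lambda>i. if i < m then c * x i else 0)"
    using y matvec_diag_mat[OF assms(3)] by simp
  also have "\<dots> \<le> c * qnorm q nc x" using qnorm_truncate_scale_le assms by blast
  also have "\<dots> \<le> c" using x assms by (simp add: mult_left_le)
  finally show "y \<le> c" .
qed

lemma quant_zero [simp]: "quant \<eta> 0 = 0"
  unfolding quant_def by simp

lemma quant_eq_0: "0 \<le> a \<Longrightarrow> a < \<eta> \<Longrightarrow> quant \<eta> a = 0"
  unfolding quant_def by (simp add: floor_eq_iff)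

lemma quant_nonneg: "0 \<le> a \<Longrightarrow> 0 < \<eta> \<Longrightarrow> 0 \<le> quant \<eta> a"
  unfolding quant_def by simp

lemma quant_diag_mat: "quant \<eta> (diag_mat m c i j) = diag_mat m (quant \<eta> c) i j"
  unfolding diag_mat_def by simp

lemma hidden_diag_net:
  assumes "\<forall>k<l. m \<le> N k" "\<forall>k. 0 \<le> c k" "\<forall>i<m. 0 \<le> x i" "i < m"
  shows "hidden N (\<lambda>k. diag_mat m (c k)) (\<lambda>_ _. 0) l x i = (\<Prod>k\<in>{1..l}. c k) * x i"
  using assms(1)
proof (induction l)
  case (Suc l)
  have "hidden N (\<lambda>k. diag_mat m (c k)) (\<lambda>_ _. 0) (Suc l) x i
      = max 0 (c (Suc l) * ((\<Prod>k\<in>{1..l}. c k) * x i))"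
    using Suc assms(4) by (simp add: matvec_diag_mat)
  also have "\<dots> = (\<Prod>k\<in>{1..Suc l}. c k) * x i"
    using assms by (simp add: prod.nat_ivl_Suc' prod_nonneg mult.assoc)
  finally show ?case .
qed simp

lemma realization_diag_net:
  assumes "L \<ge> 1" "\<forall>k<L. m \<le> N k" "\<forall>k. 0 \<le> c k" "\<forall>i<m. 0 \<le> x i"
  shows "realization L N (\<lambda>k. diag_mat m (c k)) (\<lambda>_ _. 0) x
       = (\<lambda>i. if i < m then (\<Prod>k\<in>{1..L}. c k) * x i else 0)"
proof -
  obtain l where L: "L = Suc l" using assms(1) by (cases L) auto
  then show ?thesis
    using assms hidden_diag_net[of l m N c x]
    by (auto simp: realization_def matvec_diag_mat prod.nat_ivl_Suc')
qed

lemma prod_first_then_const: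
  assumes "L \<ge> 1"
  shows "(\<Prod>k\<in>{1..L}. if k = 1 then a else r) = a * r ^ (L - 1)"
proof -
  have "{1..L} = insert 1 {2..L}" using assms by auto
  then show ?thesis by simp
qed

lemma quantization_error_witness:
  fixes D r \<eta> \<epsilon> a :: real and q :: ereal and L :: nat and N :: "nat \<Rightarrow> nat"
  assumes "D > 0" and "L \<ge> 1" and "1 \<le> m" and mle: "\<forall>l\<le>L. m \<le> N l"
    and q: "1 \<le> q" and "r \<ge> 1" and "\<eta> > 0" and a: "0 \<le> a" "a < \<eta>" "a \<le> r"
    and hyp: "\<forall>W b x. param_ball q L N r W b \<longrightarrow> (\<forall>i<N 0. \<bar>x i\<bar> \<le> D) \<longrightarrow>
       qnorm q (N L) (\<lambda>i. realization L N W b x i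
          - realization L N (\<lambda>l i j. quant \<eta> (W l i j)) (\<lambda>l i. quant \<eta> (b l i)) x i) \<le> \<epsilon>"
  shows "a * r ^ (L - 1) * D * root_q (real m) q \<le> \<epsilon>"
proof -
  define c where "c = (\<lambda>k::nat. if k = 1 then a else r)"
  define W where "W = (\<lambda>k. diag_mat m (c k))"
  define b :: "nat \<Rightarrow> nat \<Rightarrow> real" where "b = (\<lambda>_ _. 0)"
  define x :: "nat \<Rightarrow> real" where "x = (\<lambda>_. D)"
  have c: "\<forall>k. 0 \<le> c k" "\<forall>k. c k \<le> r" using a \<open>r \<ge> 1\<close> by (auto simp: c_def)
  have qc: "\<forall>k. 0 \<le> quant \<eta> (c k)" using c \<open>\<eta> > 0\<close> by (simp add: quant_nonneg)
  have mle': "\<forall>k<L. m \<le> N k" using mle by simp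
  have "opnorm q (N l) (N (l - 1)) (W l) \<le> r" if "l \<le> L" for l
  proof -
    have "m \<le> N l" "m \<le> N (l - 1)" using mle that by auto
    then show ?thesis
      using opnorm_diag_mat_le[OF q, of m "N l" "N (l - 1)" "c l"] c unfolding W_def
      by (meson order_trans)
  qed
  then have "param_ball q L N r W b"
    unfolding param_ball_def b_def using qnorm_zero[of q] \<open>r \<ge> 1\<close> by simp
  moreover have "\<forall>i<N 0. \<bar>x i\<bar> \<le> D" using \<open>D > 0\<close> by (simp add: x_def)
  ultimately have err: "qnorm q (N L) (\<lambda>i. realization L N W b x i
      - realization L N (\<lambda>k. diag_mat m (quant \<eta> (c k))) b x i) \<le> \<epsilon>"
    using hyp by (force simp: W_def b_def quant_diag_mat)
  have x: "\<forall>i<m. 0 \<le> x i" using \<open>D > 0\<close> by (simp add: x_def)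
  have R: "realization L N W b x = (\<lambda>i. if i < m then (\<Prod>k\<in>{1..L}. c k) * x i else 0)"
    unfolding W_def b_def by (rule realization_diag_net[OF \<open>L \<ge> 1\<close> mle' c(1) x])
  have P: "(\<Prod>k\<in>{1..L}. c k) = a * r ^ (L - 1)"
    unfolding c_def using \<open>L \<ge> 1\<close> by (rule prod_first_then_const)
  have QR: "realization L N (\<lambda>k. diag_mat m (quant \<eta> (c k))) b x
      = (\<lambda>i. if i < m then (\<Prod>k\<in>{1..L}. quant \<eta> (c k)) * x i else 0)"
    unfolding b_def by (rule realization_diag_net[OF \<open>L \<ge> 1\<close> mle' qc x])
  have QP: "(\<Prod>k\<in>{1..L}. quant \<eta> (c k)) = 0"
    using \<open>L \<ge> 1\<close> a by (intro prod_zero bexI[of _ 1]) (auto simp: c_def quant_eq_0)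
  have "(\<lambda>i. realization L N W b x i - realization L N (\<lambda>k. diag_mat m (quant \<eta> (c k))) b x i)
      = (\<lambda>i. if i < m then a * r ^ (L - 1) * D else 0)"
    unfolding R QR P QP by (auto simp: x_def)
  moreover have "qnorm q (N L) (\<lambda>i. if i < m then a * r ^ (L - 1) * D else 0)
      = a * r ^ (L - 1) * D * root_q (real m) q"
    using q mle \<open>1 \<le> m\<close> a \<open>D > 0\<close> \<open>r \<ge> 1\<close> by (intro qnorm_indicator_const) auto
  ultimately show ?thesis using err by simp
qed

lemma min_le_of_bound_below:
  fixes r \<eta> c :: real
  assumes "0 \<le> r" "0 < \<eta>" and bound: "\<And>a. 0 \<le> a \<Longrightarrow> a < \<eta> \<Longrightarrow> a \<le> r \<Longrightarrow> a \<le> c"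
  shows "min r \<eta> \<le> c"
proof (cases "r < \<eta>")
  case True
  then show ?thesis using bound[of r] \<open>0 \<le> r\<close> by simp
next
  case False
  have "\<eta> \<le> c" using \<open>0 < \<eta>\<close> by (rule dense_le_bounded) (use False bound in auto)
  then show ?thesis by simp
qed

theorem mainTheorem6:
  fixes D r \<eta> \<epsilon> :: real and q :: ereal and L :: nat and N :: "nat \<Rightarrow> nat"
  assumes "D > 0" and "L \<ge> 1" and "\<forall>l\<le>L. N l \<ge> 1"
    and "1 \<le> q" and "r \<ge> 1" and "\<eta> > 0" and "\<epsilon> > 0"
    and hyp: "\<forall>W b x. param_ball q L N r W b \<longrightarrow> (\<forall>i<N 0. \<bar>x i\<bar> \<le> D) \<longrightarrow>
       qnorm q (N L) (\<lambda>i. realization L N W b x i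
          - realization L N (\<lambda>l i j. quant \<eta> (W l i j)) (\<lambda>l i. quant \<eta> (b l i)) x i) \<le> \<epsilon>"
  shows "min r \<eta> \<le> \<epsilon> / (D * root_q (real (Min (N ` {0..L}))) q * r ^ (L - 1))
    \<and> (\<epsilon> < D * root_q (real (Min (N ` {0..L}))) q * r ^ L \<longrightarrow>
         \<eta> \<le> \<epsilon> / (D * root_q (real (Min (N ` {0..L}))) q * r ^ (L - 1)))"
proof -
  define m where "m = Min (N ` {0..L})"
  have mle: "\<forall>l\<le>L. m \<le> N l" unfolding m_def by (intro allI impI Min_le) auto
  have m1: "1 \<le> m" unfolding m_def using assms(3) by (subst Min_ge_iff) auto
  define K where "K = D * root_q (real m) q * r ^ (L - 1)"
  have K: "K > 0" unfolding K_def root_q_def using m1 assms by auto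
  have first: "min r \<eta> \<le> \<epsilon> / K"
  proof (rule min_le_of_bound_below[of r \<eta>])
    show "0 \<le> r" "0 < \<eta>" using assms by simp_all
    fix a assume "0 \<le> a" "a < \<eta>" "a \<le> r"
    then have "a * r ^ (L - 1) * D * root_q (real m) q \<le> \<epsilon>"
      by (rule quantization_error_witness[OF assms(1,2) m1 mle assms(4,5,6) _ _ _ hyp])
    then have "a * K \<le> \<epsilon>" unfolding K_def by (simp add: ac_simps)
    then show "a \<le> \<epsilon> / K" using K by (simp add: field_simps)
  qed
  have "\<eta> \<le> \<epsilon> / K" if "\<epsilon> < D * root_q (real m) q * r ^ L"
  proof -
    have "r ^ L = r * r ^ (L - 1)" using \<open>L \<ge> 1\<close> by (simp add: power_eq_if)
    then have "\<epsilon> / K < r" using that K unfolding K_def by (simp add: field_simps ac_simps)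
    then show ?thesis using first by linarith
  qed
  then show ?thesis using first unfolding K_def m_def by blast
qed

end
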